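(* For every finite graph $G$: (1) $\widetilde{\omega}(G) \leq \widetilde{\Delta}(G)$, unless $\widetilde{G}$ is edgeless (in which case $\widetilde{\omega}(G) \leq 1$ and $\widetilde{\Delta}(G) = 0$); (2) $\mathsf{cideg}(G) \leq 3^{\lceil \widetilde{\Delta}(G)/3\rceil}$; (3) $\widetilde{\Delta}(G) \leq \mathsf{cideg}(G) \cdot (\widetilde{\omega}(G) - 1)$.
   Context: Two vertices of $G$ are equivalent if they lie in exactly the same maximal cliques of $G$. The clique-quotient graph $\widetilde{G}$ has the equivalence classes as vertices, two distinct classes adjacent iff their representatives are adjacent in $G$. $\widetilde{\Delta}(G)$ is the maximum degree of $\widetilde{G}$. $\widetilde{\omega}(G)$ is the maximum over maximal cliques $K$ of the number of equivalence classes meeting $K$; $\mathsf{cideg}(G)$ is the maximum over vertices $v$ of the number of maximal cliques of $G$ containing $v$. *)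

theory Defs
  imports Complex_Main
begin

definition fin_graph :: "'a set \<Rightarrow> ('a \<Rightarrow> 'a \<Rightarrow> bool) \<Rightarrow> bool" where
  "fin_graph V E \<longleftrightarrow> finite V \<and> (\<forall>x y. E x y \<longrightarrow> x \<in> V \<and> y \<in> V)
     \<and> (\<forall>x y. E x y \<longrightarrow> E y x) \<and> (\<forall>x. \<not> E x x)"

definition is_clique :: "'a set \<Rightarrow> ('a \<Rightarrow> 'a \<Rightarrow> bool) \<Rightarrow> 'a set \<Rightarrow> bool" where
  "is_clique V E K \<longleftrightarrow> K \<subseteq> V \<and> (\<forall>x\<in>K. \<forall>y\<in>K. x \<noteq> y \<longrightarrow> E x y)"

definition max_clique :: "'a set \<Rightarrow> ('a \<Rightarrow> 'a \<Rightarrow> bool) \<Rightarrow> 'a set \<Rightarrow> bool" where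
  "max_clique V E K \<longleftrightarrow> is_clique V E K \<and> (\<forall>K'. is_clique V E K' \<and> K \<subseteq> K' \<longrightarrow> K' = K)"

definition cliques_at :: "'a set \<Rightarrow> ('a \<Rightarrow> 'a \<Rightarrow> bool) \<Rightarrow> 'a \<Rightarrow> 'a set set" where
  "cliques_at V E v = {K. max_clique V E K \<and> v \<in> K}"

definition clique_class :: "'a set \<Rightarrow> ('a \<Rightarrow> 'a \<Rightarrow> bool) \<Rightarrow> 'a \<Rightarrow> 'a set" where
  "clique_class V E v = {u \<in> V. cliques_at V E u = cliques_at V E v}"

definition clique_classes :: "'a set \<Rightarrow> ('a \<Rightarrow> 'a \<Rightarrow> bool) \<Rightarrow> 'a set set" where
  "clique_classes V E = clique_class V E ` V"

definition quot_adj :: "'a set \<Rightarrow> ('a \<Rightarrow> 'a \<Rightarrow> bool) \<Rightarrow> 'a set \<Rightarrow> 'a set \<Rightarrow> bool" where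
  "quot_adj V E C D \<longleftrightarrow> C \<noteq> D \<and> (\<exists>u\<in>C. \<exists>v\<in>D. E u v)"

definition quot_deg :: "'a set \<Rightarrow> ('a \<Rightarrow> 'a \<Rightarrow> bool) \<Rightarrow> 'a set \<Rightarrow> nat" where
  "quot_deg V E C = card {D \<in> clique_classes V E. quot_adj V E C D}"

definition quot_edgeless :: "'a set \<Rightarrow> ('a \<Rightarrow> 'a \<Rightarrow> bool) \<Rightarrow> bool" where
  "quot_edgeless V E \<longleftrightarrow> (\<forall>C\<in>clique_classes V E. \<forall>D\<in>clique_classes V E. \<not> quot_adj V E C D)"

text \<open>Maxima over possibly empty index sets are taken with the convention max {} = 0.\<close>
definition tDelta :: "'a set \<Rightarrow> ('a \<Rightarrow> 'a \<Rightarrow> bool) \<Rightarrow> nat" where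
  "tDelta V E = Max (insert 0 (quot_deg V E ` clique_classes V E))"

definition tomega :: "'a set \<Rightarrow> ('a \<Rightarrow> 'a \<Rightarrow> bool) \<Rightarrow> nat" where
  "tomega V E = Max (insert 0 {card {C \<in> clique_classes V E. C \<inter> K \<noteq> {}} | K. max_clique V E K})"

definition cideg :: "'a set \<Rightarrow> ('a \<Rightarrow> 'a \<Rightarrow> bool) \<Rightarrow> nat" where
  "cideg V E = Max (insert 0 ((\<lambda>v. card (cliques_at V E v)) ` V))"

end

theory Submission
  imports Defs
begin

text \<open>Vertices of one class lie in the same maximal cliques, so every maximal clique is a union
  of classes, and two classes are adjacent in the quotient graph exactly when they are completely
  joined in G.

  (1) A maximal clique K meeting two classes has a vertex x that lies in a second maximal clique,
  so x has a neighbour w outside K; the class of x is adjacent to every other class meeting K and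
  to the class of w.

  (2) A maximal clique through v is the class C of v together with the neighbouring classes of C
  that it contains, and these form a maximal clique of the quotient graph restricted to the
  neighbours of C.  So the maximal cliques through v are at most as many as the maximal cliques of
  a graph on at most tDelta vertices, which by Moon and Moser are at most 3 powr (tDelta / 3).

  (3) Every neighbouring class of C meets some maximal clique through v, and each of these meets
  at most tomega - 1 classes besides C.\<close>

section \<open>Maximal cliques\<close>

lemma finite_max_cliques: "finite N \<Longrightarrow> finite {K. max_clique N R K}"
  by (rule finite_subset[of _ "Pow N"]) (auto simp: max_clique_def is_clique_def)

lemma max_clique_subset: "max_clique N R K \<Longrightarrow> K \<subseteq> N"
  by (simp add: max_clique_def is_clique_def)

lemma max_clique_edge: "max_clique N R K \<Longrightarrow> x \<in> K \<Longrightarrow> y \<in> K \<Longrightarrow> x \<noteq> y \<Longrightarrow> R x y"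
  by (simp add: max_clique_def is_clique_def)

lemma max_clique_exists:
  assumes "finite N" "is_clique N R S"
  shows "\<exists>K. max_clique N R K \<and> S \<subseteq> K"
proof -
  let ?F = "{K. is_clique N R K \<and> S \<subseteq> K}"
  have "finite ?F"
    by (rule finite_subset[of _ "Pow N"]) (auto simp: is_clique_def \<open>finite N\<close>)
  moreover have "S \<in> ?F"
    using assms by simp
  ultimately obtain K where "K \<in> ?F" "\<forall>K'\<in>?F. K \<subseteq> K' \<longrightarrow> K = K'"
    by (meson finite_has_maximal2)
  then show ?thesis
    unfolding max_clique_def by blast
qed

lemma max_clique_absorbs:
  assumes "symp R" and K: "max_clique N R K" and "x \<in> N" and "\<forall>y\<in>K. y \<noteq> x \<longrightarrow> R x y"
  shows "x \<in> K"
proof -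
  have "is_clique N R (insert x K)"
    using K assms by (auto simp: max_clique_def is_clique_def dest: sympD)
  then show ?thesis
    using K by (auto simp: max_clique_def)
qed

section \<open>The Moon--Moser bound\<close>

lemma cube_le_three_pow: "n ^ 3 \<le> (3::nat) ^ n"
proof (cases "n \<le> 3")
  case True
  then have "n \<in> {0, 1, 2, 3}" by auto
  then show ?thesis by auto
next
  case False
  then have "3 \<le> n" by simp
  then show ?thesis
  proof (induction n rule: nat_induct_at_least)
    case base
    then show ?case by simp
  next
    case (Suc n)
    then obtain m where "n = m + 3"
      using le_Suc_ex by (metis add.commute)
    then have "(Suc n) ^ 3 \<le> 3 * n ^ 3"
      by (simp add: power3_eq_cube algebra_simps)
    then show ?case using Suc.IH by simp
  qed
qed

text \<open>Only true for integers: the real function x / 3 powr (x / 3) exceeds 1 near e.\<close>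
lemma real_le_three_powr: "real k \<le> 3 powr (real k / 3)"
proof -
  have "(real k) ^ 3 \<le> 3 ^ k"
    using cube_le_three_pow[of k] by (metis of_nat_le_iff of_nat_numeral of_nat_power)
  also have "\<dots> = (3 powr (real k / 3)) ^ 3"
    by (simp add: powr_realpow[symmetric] powr_powr)
  finally show ?thesis
    using power_le_imp_le_base by force
qed

lemma three_powr_le_ceiling: "3 powr (real n / 3) \<le> 3 ^ nat \<lceil>real n / 3\<rceil>"
proof -
  have "3 powr (real n / 3) \<le> 3 powr real (nat \<lceil>real n / 3\<rceil>)"
    by (intro powr_mono) linarith+
  also have "\<dots> = 3 ^ nat \<lceil>real n / 3\<rceil>"
    by (rule powr_realpow) simp
  finally show ?thesis .
qed

definition nbhd :: "'a set \<Rightarrow> ('a \<Rightarrow> 'a \<Rightarrow> bool) \<Rightarrow> 'a \<Rightarrow> 'a set" where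
  "nbhd N R w = {u \<in> N. u \<noteq> w \<and> R w u}"

lemma max_clique_meets_non_nbhd:
  assumes "symp R" "max_clique N R K" "v \<in> N"
  shows "\<exists>w\<in>K. w \<notin> nbhd N R v"
  using max_clique_absorbs[OF assms] by (auto simp: nbhd_def)

lemma max_clique_nbhd_Diff:
  assumes "symp R" and K: "max_clique N R K" and "w \<in> K"
  shows "max_clique (nbhd N R w) R (K - {w})"
  unfolding max_clique_def
proof (intro conjI allI impI)
  show "is_clique (nbhd N R w) R (K - {w})"
    using K assms by (auto simp: max_clique_def is_clique_def nbhd_def)
  fix T assume T: "is_clique (nbhd N R w) R T \<and> K - {w} \<subseteq> T"
  have "is_clique N R (insert w T)"
    using T \<open>symp R\<close> \<open>w \<in> K\<close> K
    by (auto simp: max_clique_def is_clique_def nbhd_def dest: sympD)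
  then have "insert w T = K"
    using K T by (auto simp: max_clique_def)
  moreover have "w \<notin> T"
    using T by (auto simp: is_clique_def nbhd_def)
  ultimately show "T = K - {w}" by auto
qed

lemma card_cliques_at_le_max_cliques_nbhd:
  assumes "finite N" "symp R"
  shows "card (cliques_at N R w) \<le> card {K. max_clique (nbhd N R w) R K}"
proof (rule card_inj_on_le)
  show "inj_on (\<lambda>K. K - {w}) (cliques_at N R w)"
    by (rule inj_onI) (metis cliques_at_def insert_Diff mem_Collect_eq)
  show "(\<lambda>K. K - {w}) ` cliques_at N R w \<subseteq> {K. max_clique (nbhd N R w) R K}"
    using max_clique_nbhd_Diff[OF \<open>symp R\<close>] by (auto simp: cliques_at_def)
  show "finite {K. max_clique (nbhd N R w) R K}"
    using \<open>finite N\<close> by (intro finite_max_cliques) (simp add: nbhd_def)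
qed

text \<open>Moon--Moser: every maximal clique contains a vertex w outside the neighbourhood of a
  vertex of maximum degree d, and the maximal cliques through w come from maximal cliques of the
  neighbourhood of w, which has at most d vertices.\<close>
lemma card_max_cliques_le:
  assumes "finite N" "symp R"
  shows "real (card {K. max_clique N R K}) \<le> 3 powr (real (card N) / 3)"
  using assms(1)
proof (induction "card N" arbitrary: N rule: less_induct)
  case less
  show ?case
  proof (cases "N = {}")
    case True
    then have "{K. max_clique N R K} = {{}}"
      by (auto simp: max_clique_def is_clique_def)
    then show ?thesis using True by simp
  next
    case False
    have nbhd_sub: "nbhd N R w \<subseteq> N" for w
      by (auto simp: nbhd_def)
    define d where "d = Max ((\<lambda>w. card (nbhd N R w)) ` N)"
    have "d \<in> (\<lambda>w. card (nbhd N R w)) ` N"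
      unfolding d_def using less.prems False by (intro Max_in) auto
    then obtain v where v: "v \<in> N" "card (nbhd N R v) = d"
      by auto
    define A where "A = N - nbhd N R v"
    have card_A: "card A + d = card N"
      using card_Diff_subset[OF _ nbhd_sub] card_mono[OF less.prems nbhd_sub] less.prems v(2)
      by (auto simp: A_def finite_subset[OF nbhd_sub])
    have cliques_at_le: "real (card (cliques_at N R w)) \<le> 3 powr (real d / 3)" if "w \<in> N" for w
    proof -
      have "nbhd N R w \<subset> N"
        using that nbhd_sub by (auto simp: nbhd_def)
      then have "card (nbhd N R w) < card N"
        using less.prems by (rule psubset_card_mono[rotated])
      then have "real (card {K. max_clique (nbhd N R w) R K}) \<le> 3 powr (real (card (nbhd N R w)) / 3)"
        using less.hyps less.prems by (simp add: nbhd_def)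
      also have "\<dots> \<le> 3 powr (real d / 3)"
        using that less.prems by (intro powr_mono) (auto simp: d_def)
      finally show ?thesis
        using card_cliques_at_le_max_cliques_nbhd[OF less.prems \<open>symp R\<close>, of w] by linarith
    qed
    have "{K. max_clique N R K} \<subseteq> (\<Union>w\<in>A. cliques_at N R w)"
    proof
      fix K assume K: "K \<in> {K. max_clique N R K}"
      then obtain w where "w \<in> K" "w \<notin> nbhd N R v"
        using max_clique_meets_non_nbhd[OF \<open>symp R\<close> _ v(1)] by blast
      moreover have "K \<subseteq> N"
        using K by (simp add: max_clique_def is_clique_def)
      ultimately show "K \<in> (\<Union>w\<in>A. cliques_at N R w)"
        using K by (auto simp: A_def cliques_at_def)
    qed
    then have "card {K. max_clique N R K} \<le> card (\<Union>w\<in>A. cliques_at N R w)"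
      using less.prems by (intro card_mono) (auto simp: A_def cliques_at_def finite_max_cliques)
    also have "\<dots> \<le> (\<Sum>w\<in>A. card (cliques_at N R w))"
      using less.prems by (intro card_UN_le) (simp add: A_def)
    finally have "real (card {K. max_clique N R K}) \<le> (\<Sum>w\<in>A. real (card (cliques_at N R w)))"
      by (metis of_nat_le_iff of_nat_sum)
    also have "\<dots> \<le> real (card A) * 3 powr (real d / 3)"
      using sum_mono[of A _ "\<lambda>_. 3 powr (real d / 3)"] cliques_at_le by (simp add: A_def)
    also have "\<dots> \<le> 3 powr (real (card A) / 3) * 3 powr (real d / 3)"
      by (intro mult_right_mono real_le_three_powr) simp
    also have "\<dots> = 3 powr (real (card N) / 3)"
      by (simp flip: card_A powr_add add_divide_distrib)
    finally show ?thesis .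
  qed
qed

section \<open>The clique-quotient graph\<close>

locale fin_simple_graph =
  fixes V :: "'a set" and E :: "'a \<Rightarrow> 'a \<Rightarrow> bool"
  assumes graph: "fin_graph V E"
begin

abbreviation classes_meeting :: "'a set \<Rightarrow> 'a set set" where
  "classes_meeting K \<equiv> {C \<in> clique_classes V E. C \<inter> K \<noteq> {}}"

abbreviation quot_nbrs :: "'a set \<Rightarrow> 'a set set" where
  "quot_nbrs C \<equiv> {D \<in> clique_classes V E. quot_adj V E C D}"

lemma finite_V: "finite V"
  using graph by (simp add: fin_graph_def)

lemma edge_in_V: "E x y \<Longrightarrow> x \<in> V \<and> y \<in> V"
  using graph by (simp add: fin_graph_def)

lemma symp_E: "symp E"
  using graph by (auto simp: fin_graph_def intro: sympI)

lemma edge_in_max_clique: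
  assumes "E u w"
  obtains K where "max_clique V E K" "u \<in> K" "w \<in> K"
proof -
  have "is_clique V E {u, w}"
    using assms edge_in_V symp_E by (auto simp: is_clique_def dest: sympD)
  then obtain K where "max_clique V E K" "{u, w} \<subseteq> K"
    using max_clique_exists[OF finite_V] by blast
  with that show ?thesis
    by simp
qed

lemma finite_clique_classes: "finite (clique_classes V E)"
  by (simp add: clique_classes_def finite_V)

lemma clique_class_self: "v \<in> V \<Longrightarrow> v \<in> clique_class V E v"
  by (simp add: clique_class_def)

lemma clique_class_in_classes: "v \<in> V \<Longrightarrow> clique_class V E v \<in> clique_classes V E"
  by (simp add: clique_classes_def)

lemma clique_classes_eq: "C \<in> clique_classes V E \<Longrightarrow> x \<in> C \<Longrightarrow> C = clique_class V E x"
  by (auto simp: clique_classes_def clique_class_def)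

lemma clique_classes_subset: "C \<in> clique_classes V E \<Longrightarrow> C \<subseteq> V"
  by (auto simp: clique_classes_def clique_class_def)

lemma clique_classes_nonempty: "C \<in> clique_classes V E \<Longrightarrow> C \<noteq> {}"
  by (auto simp: clique_classes_def dest: clique_class_self)

lemma clique_class_subset_max_clique:
  "max_clique V E K \<Longrightarrow> x \<in> K \<Longrightarrow> clique_class V E x \<subseteq> K"
  by (auto simp: clique_class_def cliques_at_def)

lemma classes_meeting_subset:
  "max_clique V E K \<Longrightarrow> C \<in> classes_meeting K \<Longrightarrow> C \<subseteq> K"
  using clique_classes_eq clique_class_subset_max_clique by blast

lemma symp_quot_adj: "symp (quot_adj V E)"
  using symp_E unfolding quot_adj_def symp_def by blast

text \<open>An edge between the two classes extends to a maximal clique, which then contains both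
  classes.\<close>
lemma quot_adj_edge:
  assumes C: "C \<in> clique_classes V E" and D: "D \<in> clique_classes V E" and "quot_adj V E C D"
    and "x \<in> C" "y \<in> D"
  shows "E x y"
proof -
  obtain u w where uw: "u \<in> C" "w \<in> D" "E u w" "C \<noteq> D"
    using \<open>quot_adj V E C D\<close> by (auto simp: quot_adj_def)
  obtain K where K: "max_clique V E K" "u \<in> K" "w \<in> K"
    using edge_in_max_clique[OF \<open>E u w\<close>] .
  have "C \<subseteq> K" "D \<subseteq> K"
    using classes_meeting_subset[OF K(1)] C D uw(1,2) K(2,3) by blast+
  moreover have "x \<noteq> y"
    using clique_classes_eq[OF C \<open>x \<in> C\<close>] clique_classes_eq[OF D \<open>y \<in> D\<close>] uw(4) by auto
  ultimately show ?thesis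
    using max_clique_edge[OF K(1)] \<open>x \<in> C\<close> \<open>y \<in> D\<close> by blast
qed

lemma max_clique_quot_adj:
  assumes "max_clique V E K" "x \<in> K" "y \<in> K" "clique_class V E x \<noteq> clique_class V E y"
  shows "quot_adj V E (clique_class V E x) (clique_class V E y)"
proof -
  have "x \<in> V" "y \<in> V" "x \<noteq> y"
    using assms max_clique_subset[OF assms(1)] by auto
  then have "E x y"
    using max_clique_edge[OF assms(1-3)] by blast
  then show ?thesis
    unfolding quot_adj_def using assms(4) clique_class_self \<open>x \<in> V\<close> \<open>y \<in> V\<close> by blast
qed

lemma classes_meeting_quot_adj:
  assumes "max_clique V E K" "C \<in> classes_meeting K" "D \<in> classes_meeting K" "C \<noteq> D"
  shows "quot_adj V E C D"
proof -
  obtain x y where x: "x \<in> C" "x \<in> K" and y: "y \<in> D" "y \<in> K"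
    using assms by blast
  then have classes: "C = clique_class V E x" "D = clique_class V E y"
    using assms(2,3) clique_classes_eq by auto
  show ?thesis
    using assms(4) unfolding classes by (rule max_clique_quot_adj[OF assms(1) x(2) y(2)])
qed

lemma finite_classes_meeting_cards: "finite {card (classes_meeting K) | K. max_clique V E K}"
  using finite_max_cliques[OF finite_V, of E] by (simp add: setcompr_eq_image)

lemma card_classes_meeting_le_tomega:
  "max_clique V E K \<Longrightarrow> card (classes_meeting K) \<le> tomega V E"
  unfolding tomega_def using finite_classes_meeting_cards by (intro Max_ge) blast+

lemma tomega_leI: "(\<And>K. max_clique V E K \<Longrightarrow> card (classes_meeting K) \<le> n) \<Longrightarrow> tomega V E \<le> n"
  unfolding tomega_def using finite_classes_meeting_cards by (intro Max.boundedI) blast+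

lemma quot_deg_le_tDelta: "C \<in> clique_classes V E \<Longrightarrow> quot_deg V E C \<le> tDelta V E"
  unfolding tDelta_def using finite_clique_classes by (intro Max_ge) auto

lemma tDelta_leI: "(\<And>C. C \<in> clique_classes V E \<Longrightarrow> quot_deg V E C \<le> n) \<Longrightarrow> tDelta V E \<le> n"
  unfolding tDelta_def using finite_clique_classes by (intro Max.boundedI) auto

lemma card_cliques_at_le_cideg: "v \<in> V \<Longrightarrow> card (cliques_at V E v) \<le> cideg V E"
  unfolding cideg_def using finite_V by (intro Max_ge) auto

lemma cideg_leI: "(\<And>v. v \<in> V \<Longrightarrow> card (cliques_at V E v) \<le> n) \<Longrightarrow> cideg V E \<le> n"
  unfolding cideg_def using finite_V by (intro Max.boundedI) auto

lemma max_clique_has_outside_edge: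
  assumes K: "max_clique V E K"
    and C: "C \<in> classes_meeting K" and D: "D \<in> classes_meeting K" and "C \<noteq> D"
  obtains x w where "x \<in> K" "w \<notin> K" "E x w"
proof -
  obtain u v where u: "u \<in> C" "u \<in> K" and v: "v \<in> D" "v \<in> K"
    using C D by blast
  have "cliques_at V E u \<noteq> cliques_at V E v"
  proof
    assume "cliques_at V E u = cliques_at V E v"
    then have "clique_class V E u = clique_class V E v"
      by (simp add: clique_class_def)
    then show False
      using clique_classes_eq C D u(1) v(1) \<open>C \<noteq> D\<close> by auto
  qed
  then obtain K' x y where K': "max_clique V E K'" and "x \<in> K" "y \<in> K" "x \<in> K'" "y \<notin> K'"
    using u(2) v(2) by (auto simp: cliques_at_def)
  have "\<not> K' \<subseteq> K"
  proof
    assume "K' \<subseteq> K"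
    then have "K = K'"
      using K K' by (auto simp: max_clique_def)
    then show False
      using \<open>y \<in> K\<close> \<open>y \<notin> K'\<close> by simp
  qed
  then obtain w where "w \<in> K'" "w \<notin> K"
    by blast
  moreover have "E x w"
    using max_clique_edge[OF K' \<open>x \<in> K'\<close> \<open>w \<in> K'\<close>] \<open>x \<in> K\<close> \<open>w \<notin> K\<close> by blast
  ultimately show ?thesis
    using that \<open>x \<in> K\<close> by blast
qed

lemma card_classes_meeting_le_quot_deg:
  assumes K: "max_clique V E K" and "x \<in> K" "w \<notin> K" "E x w"
  shows "card (classes_meeting K) \<le> quot_deg V E (clique_class V E x)"
proof -
  let ?Cx = "clique_class V E x" and ?Cw = "clique_class V E w"
  have "x \<in> V" "w \<in> V"
    using edge_in_V[OF \<open>E x w\<close>] by auto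
  have Cx: "?Cx \<in> classes_meeting K"
    using \<open>x \<in> K\<close> \<open>x \<in> V\<close> clique_class_self clique_class_in_classes by blast
  have Cw: "?Cw \<notin> classes_meeting K"
    using classes_meeting_subset[OF K] clique_class_self[OF \<open>w \<in> V\<close>] \<open>w \<notin> K\<close> by blast
  have "?Cx \<noteq> ?Cw"
    using Cx Cw by auto
  have "insert ?Cw (classes_meeting K - {?Cx}) \<subseteq> quot_nbrs ?Cx"
  proof
    fix D assume D: "D \<in> insert ?Cw (classes_meeting K - {?Cx})"
    show "D \<in> quot_nbrs ?Cx"
    proof (cases "D = ?Cw")
      case True
      then show ?thesis
        using \<open>?Cx \<noteq> ?Cw\<close> \<open>E x w\<close> \<open>x \<in> V\<close> \<open>w \<in> V\<close> clique_class_self clique_class_in_classes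
        unfolding quot_adj_def by blast
    next
      case False
      then show ?thesis
        using D Cx classes_meeting_quot_adj[OF K Cx] by auto
    qed
  qed
  then have "card (insert ?Cw (classes_meeting K - {?Cx})) \<le> quot_deg V E ?Cx"
    unfolding quot_deg_def by (rule card_mono[rotated]) (simp add: finite_clique_classes)
  moreover have "card (insert ?Cw (classes_meeting K - {?Cx})) = card (classes_meeting K)"
    using Cw card_Suc_Diff1[OF _ Cx] finite_clique_classes by simp
  ultimately show ?thesis
    by simp
qed

lemma tomega_le_tDelta:
  assumes "\<not> quot_edgeless V E"
  shows "tomega V E \<le> tDelta V E"
proof -
  obtain C D where C: "C \<in> clique_classes V E" and "D \<in> quot_nbrs C"
    using assms by (auto simp: quot_edgeless_def)
  then have "1 \<le> quot_deg V E C"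
    unfolding quot_deg_def using finite_clique_classes by (auto simp: Suc_le_eq card_gt_0_iff)
  then have "1 \<le> tDelta V E"
    using quot_deg_le_tDelta[OF C] by linarith
  moreover have "card (classes_meeting K) \<le> tDelta V E"
    if K: "max_clique V E K" and several: "\<not> card (classes_meeting K) \<le> 1" for K
  proof -
    obtain C1 C2 where "C1 \<in> classes_meeting K" "C2 \<in> classes_meeting K" "C1 \<noteq> C2"
      using several finite_clique_classes card_le_Suc0_iff_eq[of "classes_meeting K"] by auto
    then obtain x w where "x \<in> K" "w \<notin> K" "E x w"
      using max_clique_has_outside_edge[OF K] by blast
    then have "card (classes_meeting K) \<le> quot_deg V E (clique_class V E x)"
      by (rule card_classes_meeting_le_quot_deg[OF K])
    also have "\<dots> \<le> tDelta V E"
      using quot_deg_le_tDelta clique_class_in_classes edge_in_V \<open>E x w\<close> by blast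
    finally show ?thesis .
  qed
  ultimately show ?thesis
    by (intro tomega_leI) force
qed

lemma quot_edgeless_tomega_le_1:
  assumes "quot_edgeless V E"
  shows "tomega V E \<le> 1"
proof (rule tomega_leI)
  fix K assume K: "max_clique V E K"
  have "C = D" if "C \<in> classes_meeting K" "D \<in> classes_meeting K" for C D
    using classes_meeting_quot_adj[OF K that] that assms by (auto simp: quot_edgeless_def)
  then show "card (classes_meeting K) \<le> 1"
    using finite_clique_classes by (simp add: card_le_Suc0_iff_eq)
qed

lemma quot_edgeless_tDelta_eq_0:
  assumes "quot_edgeless V E"
  shows "tDelta V E = 0"
proof -
  have "quot_deg V E C = 0" if "C \<in> clique_classes V E" for C
  proof -
    have "quot_nbrs C = {}"
      using assms that unfolding quot_edgeless_def by blast
    then show ?thesis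
      unfolding quot_deg_def by (simp only: card.empty)
  qed
  then show ?thesis
    by (intro le_zero_eq[THEN iffD1] tDelta_leI) simp
qed

lemma quot_nbrs_subset_classes_meeting:
  assumes "v \<in> V"
  shows "quot_nbrs (clique_class V E v)
    \<subseteq> (\<Union>K\<in>cliques_at V E v. classes_meeting K - {clique_class V E v})"
proof
  let ?C = "clique_class V E v"
  fix D assume D: "D \<in> quot_nbrs ?C"
  then obtain d where "d \<in> D"
    using clique_classes_nonempty by blast
  then have "E v d"
    using D quot_adj_edge clique_class_in_classes clique_class_self \<open>v \<in> V\<close> by blast
  then obtain K where "max_clique V E K" "v \<in> K" "d \<in> K"
    by (rule edge_in_max_clique)
  moreover have "D \<noteq> ?C"
    using D by (auto simp: quot_adj_def)
  ultimately show "D \<in> (\<Union>K\<in>cliques_at V E v. classes_meeting K - {?C})"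
    using D \<open>d \<in> D\<close> by (auto simp: cliques_at_def)
qed

lemma quot_deg_le_card_cliques_at_mult:
  assumes "v \<in> V"
  shows "quot_deg V E (clique_class V E v) \<le> card (cliques_at V E v) * (tomega V E - 1)"
proof -
  let ?C = "clique_class V E v"
  have fin: "finite (cliques_at V E v)"
    using finite_max_cliques[OF finite_V] by (simp add: cliques_at_def)
  have "quot_deg V E ?C \<le> card (\<Union>K\<in>cliques_at V E v. classes_meeting K - {?C})"
    unfolding quot_deg_def using quot_nbrs_subset_classes_meeting[OF assms] fin finite_clique_classes
    by (intro card_mono) auto
  also have "\<dots> \<le> (\<Sum>K\<in>cliques_at V E v. card (classes_meeting K - {?C}))"
    by (rule card_UN_le[OF fin])
  also have "\<dots> \<le> (\<Sum>K\<in>cliques_at V E v. tomega V E - 1)"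
  proof (rule sum_mono)
    fix K assume K: "K \<in> cliques_at V E v"
    then have "?C \<in> classes_meeting K"
      using assms clique_class_self clique_class_in_classes by (auto simp: cliques_at_def)
    then have "card (classes_meeting K - {?C}) = card (classes_meeting K) - 1"
      using finite_clique_classes by (simp add: card_Diff_singleton)
    moreover have "card (classes_meeting K) \<le> tomega V E"
      using card_classes_meeting_le_tomega K by (simp add: cliques_at_def)
    ultimately show "card (classes_meeting K - {?C}) \<le> tomega V E - 1"
      by linarith
  qed
  finally show ?thesis
    by simp
qed

lemma tomega_pos:
  assumes "V \<noteq> {}"
  shows "1 \<le> tomega V E"
proof -
  obtain v where "v \<in> V"
    using assms by blast
  then have "is_clique V E {v}"
    by (simp add: is_clique_def)
  then obtain K where K: "max_clique V E K" "v \<in> K"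
    using max_clique_exists[OF finite_V] by blast
  then have "clique_class V E v \<in> classes_meeting K"
    using \<open>v \<in> V\<close> clique_class_self clique_class_in_classes by blast
  then have "1 \<le> card (classes_meeting K)"
    using finite_clique_classes by (auto simp: Suc_le_eq card_gt_0_iff)
  then show ?thesis
    using card_classes_meeting_le_tomega[OF K(1)] by linarith
qed

lemma tDelta_le_cideg_mult:
  "int (tDelta V E) \<le> int (cideg V E) * (int (tomega V E) - 1)"
proof (cases "V = {}")
  case True
  then show ?thesis
    by (simp add: tDelta_def cideg_def clique_classes_def)
next
  case False
  have "tDelta V E \<le> cideg V E * (tomega V E - 1)"
  proof (rule tDelta_leI)
    fix C assume "C \<in> clique_classes V E"
    then obtain v where "v \<in> V" "C = clique_class V E v"
      by (auto simp: clique_classes_def)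
    then have "quot_deg V E C \<le> card (cliques_at V E v) * (tomega V E - 1)"
      using quot_deg_le_card_cliques_at_mult by simp
    also have "\<dots> \<le> cideg V E * (tomega V E - 1)"
      using card_cliques_at_le_cideg[OF \<open>v \<in> V\<close>] by (rule mult_le_mono1)
    finally show "quot_deg V E C \<le> cideg V E * (tomega V E - 1)" .
  qed
  then have "int (tDelta V E) \<le> int (cideg V E * (tomega V E - 1))"
    by (simp only: of_nat_le_iff)
  also have "\<dots> = int (cideg V E) * (int (tomega V E) - 1)"
    using tomega_pos[OF False] by (simp add: of_nat_diff)
  finally show ?thesis .
qed

lemma max_clique_eq_class_Un_nbr_classes:
  assumes "K \<in> cliques_at V E v"
  shows "K = clique_class V E v \<union> \<Union>{D \<in> quot_nbrs (clique_class V E v). D \<subseteq> K}"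
proof
  have K: "max_clique V E K" "v \<in> K"
    using assms by (simp_all add: cliques_at_def)
  show "clique_class V E v \<union> \<Union>{D \<in> quot_nbrs (clique_class V E v). D \<subseteq> K} \<subseteq> K"
    using clique_class_subset_max_clique[OF K] by blast
  show "K \<subseteq> clique_class V E v \<union> \<Union>{D \<in> quot_nbrs (clique_class V E v). D \<subseteq> K}"
  proof
    fix x assume "x \<in> K"
    then have "x \<in> V"
      using max_clique_subset[OF K(1)] by blast
    show "x \<in> clique_class V E v \<union> \<Union>{D \<in> quot_nbrs (clique_class V E v). D \<subseteq> K}"
    proof (cases "clique_class V E x = clique_class V E v")
      case True
      then show ?thesis
        using clique_class_self[OF \<open>x \<in> V\<close>] by auto
    next
      case False
      then have "quot_adj V E (clique_class V E v) (clique_class V E x)"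
        by (intro max_clique_quot_adj[OF K \<open>x \<in> K\<close>]) auto
      then show ?thesis
        using clique_class_subset_max_clique[OF K(1) \<open>x \<in> K\<close>] clique_class_self[OF \<open>x \<in> V\<close>]
          clique_class_in_classes[OF \<open>x \<in> V\<close>] by blast
    qed
  qed
qed

text \<open>The key step: a vertex x of a class D that extends the clique of neighbouring classes
  inside K is adjacent to all of K, hence lies in K by maximality.\<close>
lemma nbr_class_subset_max_clique:
  assumes "K \<in> cliques_at V E v"
    and T: "is_clique (quot_nbrs (clique_class V E v)) (quot_adj V E) T"
    and T_sup: "{D \<in> quot_nbrs (clique_class V E v). D \<subseteq> K} \<subseteq> T"
    and "D \<in> T"
  shows "D \<subseteq> K"
proof -
  let ?C = "clique_class V E v"
  have K: "max_clique V E K" "v \<in> K"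
    using assms by (simp_all add: cliques_at_def)
  have D: "D \<in> clique_classes V E" "quot_adj V E ?C D"
    using T \<open>D \<in> T\<close> by (auto simp: is_clique_def)
  obtain x where "x \<in> D"
    using clique_classes_nonempty[OF D(1)] by blast
  then have "x \<in> V"
    using clique_classes_subset[OF D(1)] by blast
  have "E x y" if "y \<in> K" "y \<noteq> x" for y
  proof (cases "clique_class V E y = D")
    case True
    then have "x \<in> K"
      using clique_class_subset_max_clique[OF K(1) \<open>y \<in> K\<close>] \<open>x \<in> D\<close> by blast
    then show ?thesis
      using max_clique_edge[OF K(1)] that by blast
  next
    case False
    have "y \<in> V"
      using max_clique_subset[OF K(1)] \<open>y \<in> K\<close> by blast
    have "quot_adj V E D (clique_class V E y)"
    proof (cases "clique_class V E y = ?C")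
      case True
      then show ?thesis
        using D(2) symp_quot_adj by (simp add: sympD)
    next
      case False
      then have "quot_adj V E ?C (clique_class V E y)"
        by (intro max_clique_quot_adj[OF K \<open>y \<in> K\<close>]) auto
      then have "clique_class V E y \<in> T"
        using T_sup clique_class_in_classes[OF \<open>y \<in> V\<close>]
          clique_class_subset_max_clique[OF K(1) \<open>y \<in> K\<close>] by blast
      then show ?thesis
        using T \<open>D \<in> T\<close> \<open>clique_class V E y \<noteq> D\<close> unfolding is_clique_def by blast
    qed
    then show ?thesis
      using quot_adj_edge[OF D(1) clique_class_in_classes[OF \<open>y \<in> V\<close>]] \<open>x \<in> D\<close>
        clique_class_self[OF \<open>y \<in> V\<close>] by blast
  qed
  then have "x \<in> K"
    using max_clique_absorbs[OF symp_E K(1) \<open>x \<in> V\<close>] by blast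
  then show ?thesis
    using classes_meeting_subset[OF K(1)] D(1) \<open>x \<in> D\<close> by blast
qed

lemma max_clique_nbr_classes:
  assumes "K \<in> cliques_at V E v"
  shows "max_clique (quot_nbrs (clique_class V E v)) (quot_adj V E)
    {D \<in> quot_nbrs (clique_class V E v). D \<subseteq> K}"
  unfolding max_clique_def
proof (intro conjI allI impI)
  let ?F = "{D \<in> quot_nbrs (clique_class V E v). D \<subseteq> K}"
  have K: "max_clique V E K"
    using assms by (simp add: cliques_at_def)
  have "D \<in> classes_meeting K" if "D \<in> ?F" for D
    using that clique_classes_nonempty by blast
  then show "is_clique (quot_nbrs (clique_class V E v)) (quot_adj V E) ?F"
    unfolding is_clique_def using classes_meeting_quot_adj[OF K] by blast
  fix T assume "is_clique (quot_nbrs (clique_class V E v)) (quot_adj V E) T \<and> ?F \<subseteq> T"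
  then show "T = ?F"
    using nbr_class_subset_max_clique[OF assms] by (auto simp: is_clique_def)
qed

lemma card_cliques_at_le_three_powr:
  assumes "v \<in> V"
  shows "real (card (cliques_at V E v)) \<le> 3 powr (real (quot_deg V E (clique_class V E v)) / 3)"
proof -
  let ?C = "clique_class V E v"
  define nbr_classes where "nbr_classes K = {D \<in> quot_nbrs ?C. D \<subseteq> K}" for K
  have Un_nbr_classes: "K = ?C \<union> \<Union>(nbr_classes K)" if "K \<in> cliques_at V E v" for K
    unfolding nbr_classes_def using that by (rule max_clique_eq_class_Un_nbr_classes)
  have "inj_on nbr_classes (cliques_at V E v)"
    by (rule inj_onI) (metis Un_nbr_classes)
  moreover have "nbr_classes ` cliques_at V E v \<subseteq> {S. max_clique (quot_nbrs ?C) (quot_adj V E) S}"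
    using max_clique_nbr_classes by (auto simp: nbr_classes_def)
  ultimately have "card (cliques_at V E v) \<le> card {S. max_clique (quot_nbrs ?C) (quot_adj V E) S}"
    using finite_clique_classes by (intro card_inj_on_le finite_max_cliques) auto
  also have "real \<dots> \<le> 3 powr (real (card (quot_nbrs ?C)) / 3)"
    using finite_clique_classes symp_quot_adj by (intro card_max_cliques_le) auto
  finally show ?thesis
    by (simp add: quot_deg_def)
qed

lemma cideg_le_three_pow: "cideg V E \<le> 3 ^ nat \<lceil>real (tDelta V E) / 3\<rceil>"
proof (rule cideg_leI)
  fix v assume "v \<in> V"
  have "real (card (cliques_at V E v)) \<le> 3 powr (real (quot_deg V E (clique_class V E v)) / 3)"
    using card_cliques_at_le_three_powr[OF \<open>v \<in> V\<close>] .
  also have "\<dots> \<le> 3 powr (real (tDelta V E) / 3)"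
    using quot_deg_le_tDelta clique_class_in_classes[OF \<open>v \<in> V\<close>] by (intro powr_mono) auto
  also have "\<dots> \<le> 3 ^ nat \<lceil>real (tDelta V E) / 3\<rceil>"
    by (rule three_powr_le_ceiling)
  finally show "card (cliques_at V E v) \<le> 3 ^ nat \<lceil>real (tDelta V E) / 3\<rceil>"
    by (metis of_nat_le_iff of_nat_numeral of_nat_power)
qed

end

theorem lemma3p4:
  fixes V :: "'a set" and E :: "'a \<Rightarrow> 'a \<Rightarrow> bool"
  assumes "fin_graph V E"
  shows "(\<not> quot_edgeless V E \<longrightarrow> tomega V E \<le> tDelta V E)
       \<and> (quot_edgeless V E \<longrightarrow> tomega V E \<le> 1 \<and> tDelta V E = 0)
       \<and> cideg V E \<le> 3 ^ nat \<lceil>real (tDelta V E) / 3\<rceil>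
       \<and> int (tDelta V E) \<le> int (cideg V E) * (int (tomega V E) - 1)"
proof -
  interpret fin_simple_graph V E
    using assms by unfold_locales
  show ?thesis
    using tomega_le_tDelta quot_edgeless_tomega_le_1 quot_edgeless_tDelta_eq_0
      cideg_le_three_pow tDelta_le_cideg_mult by blast
qed

end
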